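(* Let $p$ be a prime number of the form $p = 9a^2 + 4b^2$ with integers $a, b$. Then the equation $p x^4 - 36 y^4 = z^2$ has no rational solutions $(x,y,z)$ other than the trivial solution $x=y=z=0$. *)

theory Defs
  imports Complex_Main "HOL-Computational_Algebra.Primes"
begin

end

theory Submission
  imports Defs "HOL-Computational_Algebra.Nth_Powers"
begin

(* Clearing denominators leaves coprime integers with P X^4 - 36 Y^4 = Z^2, where
   P = 9a^2 + 4b^2 is prime; congruences mod 4 and mod 9 force X to be odd and prime to 3.
   With t = 6Y^2 the equation reads Z^2 + t^2 = P X^4, and dividing Z + it by one of the
   Gaussian primes 3a + 2bi, 3a - 2bi yields a primitive Pythagorean triple
   s^2 + t'^2 = (X^2)^2 with 2b s + 3a t' = t, so t' is even and 3 divides s.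
   Hence X^2 + s = 2m^2, impossible modulo 3 because X^2 = 1 mod 3. *)

lemma int_square_mod_3: "(x::int) ^ 2 mod 3 = (if 3 dvd x then 0 else 1)"
proof -
  have "x ^ 2 mod 3 = (x mod 3) ^ 2 mod 3" by (simp add: power_mod)
  moreover have "x mod 3 = 0 \<or> x mod 3 = 1 \<or> x mod 3 = 2" by presburger
  moreover have "3 dvd x \<longleftrightarrow> x mod 3 = 0" by presburger
  ultimately show ?thesis by (elim disjE) simp_all
qed

lemma int_square_mod_4: "(x::int) ^ 2 mod 4 = (if even x then 0 else 1)"
proof -
  have "x ^ 2 mod 4 = (x mod 4) ^ 2 mod 4" by (simp add: power_mod)
  moreover have "x mod 4 = 0 \<or> x mod 4 = 1 \<or> x mod 4 = 2 \<or> x mod 4 = 3" by presburger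
  moreover have "even x \<longleftrightarrow> x mod 4 = 0 \<or> x mod 4 = 2" by presburger
  ultimately show ?thesis by (elim disjE) simp_all
qed

lemma rat_power_eq_of_int_imp_int:
  fixes w :: rat and N :: int
  assumes "w ^ n = of_int N" and "n > 0"
  obtains Z :: int where "w = of_int Z"
proof -
  obtain k d where q: "quotient_of w = (k, d)" by (cases "quotient_of w")
  have "d > 0" "coprime k d" "w = of_int k / of_int d"
    using q quotient_of_denom_pos quotient_of_coprime quotient_of_div by blast+
  then have "(of_int k / of_int d :: rat) ^ n = of_int N"
    using assms(1) by simp
  then have "of_int (k ^ n) = (of_int (N * d ^ n) :: rat)"
    using \<open>d > 0\<close> by (simp add: power_divide divide_eq_eq)
  then have "k ^ n = N * d ^ n"
    by (simp only: of_int_eq_iff)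
  then have "d dvd k ^ n"
    using \<open>n > 0\<close> by (simp add: dvd_power_iff_le)
  with \<open>coprime k d\<close> have "is_unit d"
    by (metis coprime_absorb_left coprime_commute coprime_power_right_iff)
  with \<open>d > 0\<close> \<open>w = of_int k / of_int d\<close> show ?thesis
    using that by simp
qed

lemma rat_pair_eq_coprime_int_multiple:
  fixes x y :: rat
  assumes "x \<noteq> 0 \<or> y \<noteq> 0"
  obtains X Y :: int and r :: rat
  where "coprime X Y" "r \<noteq> 0" "x = of_int X * r" "y = of_int Y * r"
proof -
  obtain k d where "quotient_of x = (k, d)" by (cases "quotient_of x")
  then have d: "d > 0" "x = of_int k / of_int d"
    using quotient_of_denom_pos quotient_of_div by blast+
  obtain l e where "quotient_of y = (l, e)" by (cases "quotient_of y")
  then have e: "e > 0" "y = of_int l / of_int e"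
    using quotient_of_denom_pos quotient_of_div by blast+
  define g where "g = gcd (k * e) (l * d)"
  have "g \<noteq> 0"
    using assms d e by (auto simp: g_def)
  then obtain X Y where XY: "k * e = X * g" "l * d = Y * g" "coprime X Y"
    unfolding g_def by (metis gcd_coprime_exists)
  show ?thesis
  proof
    show "coprime X Y" by (fact XY(3))
    show "of_int g / of_int (d * e) \<noteq> (0::rat)"
      using \<open>g \<noteq> 0\<close> d e by simp
    have "rat_of_int k / of_int d = of_int (k * e) / of_int (d * e)"
      using e by simp
    then show "x = of_int X * (of_int g / of_int (d * e))"
      using d XY by simp
    have "rat_of_int l / of_int e = of_int (l * d) / of_int (d * e)"
      using d by simp
    then show "y = of_int Y * (of_int g / of_int (d * e))"
      using e XY by simp
  qed
qed

lemma coprime_nonneg_mult_eq_square_imp_square: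
  fixes u v k :: int
  assumes "coprime u v" and "u \<ge> 0" and "v \<ge> 0" and "u * v = k ^ 2"
  obtains m where "u = m ^ 2"
proof -
  have "coprime (nat u) (nat v)"
    using assms(1-3) by (simp add: coprime_int_iff [symmetric])
  moreover have "nat u * nat v = nat \<bar>k\<bar> ^ 2"
    using assms(2,4) by (metis abs_ge_zero nat_mult_distrib nat_power_eq power2_abs)
  ultimately have "is_nth_power 2 (nat u)"
    by (metis is_nth_power_mult_coprime_nat_iff is_nth_power_nth_power)
  then obtain n where "nat u = n ^ 2"
    by (auto elim: is_nth_powerE)
  then have "u = int n ^ 2"
    using assms(2) by (metis int_nat_eq of_nat_power)
  then show ?thesis using that by blast
qed

lemma primitive_pythagorean_sum_eq_twice_square:
  fixes s t w :: int
  assumes pyth: "s ^ 2 + t ^ 2 = w ^ 2" and "coprime s t" and "even t" and "w \<ge> 0"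
  obtains m where "w + s = 2 * m ^ 2"
proof -
  have "odd s"
  proof
    assume "even s"
    with \<open>even t\<close> \<open>coprime s t\<close> have "is_unit (2::int)"
      using coprime_common_divisor by blast
    then show False by simp
  qed
  have "odd (s ^ 2 + t ^ 2)"
    using \<open>odd s\<close> \<open>even t\<close> by simp
  then have "odd w"
    using pyth by simp
  with \<open>odd s\<close> have "even (w + s)" "even (w - s)"
    by auto
  then obtain u v where u: "w + s = 2 * u" and v: "w - s = 2 * v"
    by (meson dvd_def)
  have "s ^ 2 \<le> w ^ 2"
    using pyth zero_le_power2 [of t] by linarith
  then have "\<bar>s\<bar> ^ 2 \<le> w ^ 2"
    by simp
  then have "\<bar>s\<bar> \<le> w"
    using \<open>w \<ge> 0\<close> by (rule power2_le_imp_le)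
  then have "u \<ge> 0" "v \<ge> 0"
    using u v by auto
  have "coprime s w"
  proof (rule coprimeI)
    fix e assume "e dvd s" "e dvd w"
    then have "e dvd w ^ 2 - s ^ 2"
      by (simp add: power2_eq_square)
    moreover have "w ^ 2 - s ^ 2 = t ^ 2"
      using pyth by linarith
    ultimately have "e dvd t ^ 2"
      by simp
    with \<open>e dvd s\<close> \<open>coprime s t\<close> show "is_unit e"
      using coprime_common_divisor coprime_power_right_iff by blast
  qed
  have "coprime u v"
  proof (rule coprimeI)
    fix e assume "e dvd u" "e dvd v"
    then have "e dvd u + v" "e dvd u - v"
      by simp_all
    moreover have "u + v = w" "u - v = s"
      using u v by linarith+
    ultimately show "is_unit e"
      using \<open>coprime s w\<close> coprime_common_divisor by metis
  qed
  obtain k where "t = 2 * k"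
    using \<open>even t\<close> by blast
  have "4 * (u * v) = (w + s) * (w - s)"
    using u v by simp
  also have "\<dots> = t ^ 2"
    using pyth by (simp add: algebra_simps power2_eq_square)
  finally have "u * v = k ^ 2"
    using \<open>t = 2 * k\<close> by (simp add: power_mult_distrib)
  then obtain m where "u = m ^ 2"
    using coprime_nonneg_mult_eq_square_imp_square \<open>coprime u v\<close> \<open>u \<ge> 0\<close> \<open>v \<ge> 0\<close> by blast
  then show ?thesis
    using that u by blast
qed

text \<open>Division of \<open>s + i t\<close> by the Gaussian prime \<open>c + i d\<close>; the divisibility hypothesis
  selects this factor rather than its conjugate.\<close>

lemma sum_two_squares_cancel_prime:
  fixes P c d s t M :: int
  assumes "prime P" and P: "c ^ 2 + d ^ 2 = P" and st: "s ^ 2 + t ^ 2 = P * M"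
    and "P dvd t * c - s * d"
  obtains s' t' where "s' ^ 2 + t' ^ 2 = M" and "t = d * s' + c * t'"
proof -
  have prod: "(s * c + t * d) ^ 2 + (t * c - s * d) ^ 2 = P ^ 2 * M"
  proof -
    have "(s * c + t * d) ^ 2 + (t * c - s * d) ^ 2 = (s ^ 2 + t ^ 2) * (c ^ 2 + d ^ 2)"
      by algebra
    then show ?thesis
      using st P by (simp add: power2_eq_square)
  qed
  obtain t' where t': "t * c - s * d = P * t'"
    using \<open>P dvd t * c - s * d\<close> by blast
  have "(s * c + t * d) ^ 2 = P ^ 2 * M - (t * c - s * d) ^ 2"
    using prod by (simp add: eq_diff_eq)
  also have "\<dots> = P * (P * M - P * t' ^ 2)"
    using t' by (simp add: algebra_simps power2_eq_square)
  finally have "P dvd (s * c + t * d) ^ 2"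
    by simp
  then obtain s' where s': "s * c + t * d = P * s'"
    using \<open>prime P\<close> prime_dvd_power by blast
  have "P \<noteq> 0"
    using \<open>prime P\<close> by auto
  show ?thesis
  proof
    have "P ^ 2 * (s' ^ 2 + t' ^ 2) = P ^ 2 * M"
      using prod s' t' by (simp add: power_mult_distrib algebra_simps)
    then show "s' ^ 2 + t' ^ 2 = M"
      using \<open>P \<noteq> 0\<close> by simp
    have "P * (d * s' + c * t') = d * (s * c + t * d) + c * (t * c - s * d)"
      using s' t' by (simp add: algebra_simps)
    also have "\<dots> = t * (c ^ 2 + d ^ 2)"
      by (simp add: algebra_simps power2_eq_square)
    finally have "P * (d * s' + c * t') = t * (c ^ 2 + d ^ 2)" .
    then show "t = d * s' + c * t'"
      using P \<open>P \<noteq> 0\<close> by (simp add: mult.commute)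
  qed
qed

lemma square_dvd_prime_imp_unit:
  fixes P q :: int
  assumes "prime P" and "q ^ 2 dvd P"
  shows "is_unit q"
proof -
  obtain r where "P = q ^ 2 * r"
    using \<open>q ^ 2 dvd P\<close> by (rule dvdE)
  then have "P = q * (q * r)"
    by (simp add: power2_eq_square mult.assoc)
  then have "is_unit q \<or> is_unit (q * r)"
    using \<open>prime P\<close> prime_elem_imp_irreducible irreducibleD by blast
  then show ?thesis
    using is_unit_mult_iff by blast
qed

lemma prime_nine_four_squares_coeffs:
  fixes P a b :: int
  assumes "prime P" and P: "P = 9 * a ^ 2 + 4 * b ^ 2"
  shows "odd a" and "\<not> 3 dvd b"
proof -
  show "odd a"
  proof
    assume "even a"
    then obtain k where "a = 2 * k" by blast
    then have "P = 2 ^ 2 * (9 * k ^ 2 + b ^ 2)"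
      using P by (simp add: power_mult_distrib)
    then have "is_unit (2::int)"
      using \<open>prime P\<close> square_dvd_prime_imp_unit by (metis dvd_triv_left)
    then show False by simp
  qed
  show "\<not> 3 dvd b"
  proof
    assume "3 dvd b"
    then obtain k where "b = 3 * k" by blast
    then have "P = 3 ^ 2 * (a ^ 2 + 4 * k ^ 2)"
      using P by (simp add: power_mult_distrib)
    then have "is_unit (3::int)"
      using \<open>prime P\<close> square_dvd_prime_imp_unit by (metis dvd_triv_left)
    then show False by simp
  qed
qed

lemma quartic_coprime_solution_odd:
  fixes P X Y Z :: int
  assumes "coprime X Y" and eq: "P * X ^ 4 - 36 * Y ^ 4 = Z ^ 2"
  shows "odd X"
proof
  assume "even X"
  then obtain X' where X': "X = 2 * X'" by blast
  have "odd Y"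
    using \<open>even X\<close> \<open>coprime X Y\<close> coprime_common_divisor [of X Y 2] by auto
  have "Z ^ 2 = 2 * (8 * P * X' ^ 4 - 18 * Y ^ 4)"
    using eq X' by (simp add: power_mult_distrib algebra_simps)
  then have "even (Z ^ 2)"
    by (rule dvdI)
  then have "even Z"
    by simp
  then obtain Z' where Z': "Z = 2 * Z'" by blast
  have "Z' ^ 2 + 9 * (Y ^ 2) ^ 2 = 4 * (P * X' ^ 4)"
    using eq X' Z' by (simp add: power_mult_distrib algebra_simps)
  then have "(Z' ^ 2 + 9 * (Y ^ 2) ^ 2) mod 4 = 0"
    by simp
  moreover have "(Y ^ 2) ^ 2 mod 4 = 1"
    using \<open>odd Y\<close> int_square_mod_4 [of "Y ^ 2"] by simp
  ultimately have "Z' ^ 2 mod 4 = 3"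
    by presburger
  then show False
    using int_square_mod_4 [of Z'] by (simp split: if_splits)
qed

lemma quartic_coprime_solution_not_3_dvd:
  fixes P X Y Z :: int
  assumes "coprime X Y" and eq: "P * X ^ 4 - 36 * Y ^ 4 = Z ^ 2"
  shows "\<not> 3 dvd X"
proof
  assume "3 dvd X"
  then obtain X' where X': "X = 3 * X'" by blast
  have "\<not> 3 dvd Y"
    using \<open>3 dvd X\<close> \<open>coprime X Y\<close> coprime_common_divisor [of X Y 3] by auto
  then have "\<not> 3 dvd Y ^ 2"
    using prime_dvd_power [of 3 Y 2] by auto
  have "Z ^ 2 = 3 * (27 * P * X' ^ 4 - 12 * Y ^ 4)"
    using eq X' by (simp add: power_mult_distrib algebra_simps)
  then have "3 dvd Z"
    using prime_dvd_power [of 3 Z 2] by simp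
  then obtain Z' where Z': "Z = 3 * Z'" by blast
  have "Z' ^ 2 + 4 * (Y ^ 2) ^ 2 = 9 * (P * X' ^ 4)"
    using eq X' Z' by (simp add: power_mult_distrib algebra_simps)
  then have "(Z' ^ 2 + 4 * (Y ^ 2) ^ 2) mod 3 = 0"
    by simp
  moreover have "(Y ^ 2) ^ 2 mod 3 = 1"
    using \<open>\<not> 3 dvd Y ^ 2\<close> int_square_mod_3 [of "Y ^ 2"] by simp
  ultimately have "Z' ^ 2 mod 3 = 2"
    by presburger
  then show False
    using int_square_mod_3 [of Z'] by (simp split: if_splits)
qed

lemma prime_nine_four_squares_descent_impossible:
  fixes P a b s t X :: int
  assumes "prime P" and P: "P = (3 * a) ^ 2 + (2 * b) ^ 2" and "odd a" and "\<not> 3 dvd b"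
    and "coprime X t" and "6 dvd t" and eq: "s ^ 2 + t ^ 2 = P * X ^ 4"
    and "P dvd t * (3 * a) - s * (2 * b)"
  shows False
proof -
  have "even t" "3 dvd t"
    using \<open>6 dvd t\<close> by presburger+
  obtain s' t' where pyth: "s' ^ 2 + t' ^ 2 = (X ^ 2) ^ 2" and t: "t = 2 * b * s' + 3 * a * t'"
    using sum_two_squares_cancel_prime [of P "3 * a" "2 * b" s t "X ^ 4"] assms
    by (auto simp flip: power_mult)
  have "3 * a * t' = t - 2 * (b * s')"
    using t by simp
  with \<open>even t\<close> have "even (3 * a * t')"
    by simp
  with \<open>odd a\<close> have "even t'"
    by simp
  have "2 * b * s' = t - 3 * (a * t')"
    using t by simp
  with \<open>3 dvd t\<close> have "3 dvd 2 * b * s'"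
    by simp
  with \<open>\<not> 3 dvd b\<close> have "3 dvd s'"
    using prime_dvd_mult_iff [of "3::int"] by auto
  have "coprime s' t'"
  proof (rule coprimeI)
    fix e assume "e dvd s'" "e dvd t'"
    then have "e dvd s' ^ 2 + t' ^ 2" "e dvd t"
      using t by (simp_all add: power2_eq_square)
    moreover have "coprime ((X ^ 2) ^ 2) t"
      using \<open>coprime X t\<close> by simp
    ultimately show "is_unit e"
      using pyth coprime_common_divisor by metis
  qed
  then obtain m where m: "X ^ 2 + s' = 2 * m ^ 2"
    using primitive_pythagorean_sum_eq_twice_square [OF pyth _ \<open>even t'\<close>] by auto
  have "\<not> 3 dvd X"
    using \<open>coprime X t\<close> \<open>3 dvd t\<close> coprime_common_divisor [of X t 3] by auto
  then have "X ^ 2 mod 3 = 1"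
    using int_square_mod_3 [of X] by simp
  with \<open>3 dvd s'\<close> have "(X ^ 2 + s') mod 3 = 1"
    by (auto elim!: dvdE)
  then have "(2 * m ^ 2) mod 3 = 1"
    by (simp only: m)
  moreover have "(2 * m ^ 2) mod 3 = (2 * (m ^ 2 mod 3)) mod 3"
    by (simp add: mod_mult_right_eq)
  ultimately show False
    using int_square_mod_3 [of m] by (simp split: if_splits)
qed

lemma quartic_no_coprime_int_solution:
  fixes P a b X Y Z :: int
  assumes "prime P" and P: "P = 9 * a ^ 2 + 4 * b ^ 2"
    and "coprime X Y" and eq: "P * X ^ 4 - 36 * Y ^ 4 = Z ^ 2"
  shows False
proof -
  define t where "t = 6 * Y ^ 2"
  have "odd a" "\<not> 3 dvd b"
    using prime_nine_four_squares_coeffs [OF \<open>prime P\<close> P] by auto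
  have "coprime X 2" "coprime X 3"
    using quartic_coprime_solution_odd quartic_coprime_solution_not_3_dvd \<open>coprime X Y\<close> eq
      prime_imp_coprime [of 3 X] by (auto simp: coprime_commute)
  then have "coprime X t"
    using \<open>coprime X Y\<close> coprime_mult_right_iff [of X 2 3] by (simp add: t_def)
  have sum: "Z ^ 2 + t ^ 2 = P * X ^ 4"
    using eq by (simp add: t_def power_mult_distrib algebra_simps)
  have P': "P = (3 * a) ^ 2 + (2 * b) ^ 2" "P = (3 * a) ^ 2 + (2 * - b) ^ 2"
    using P by (simp_all add: power_mult_distrib)
  have "(t * (3 * a) - Z * (2 * b)) * (t * (3 * a) - Z * (2 * - b))
      = P * t ^ 2 - 4 * b ^ 2 * (Z ^ 2 + t ^ 2)"
    using P by (simp add: power2_eq_square algebra_simps)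
  also have "\<dots> = P * (t ^ 2 - 4 * b ^ 2 * X ^ 4)"
    using sum by (simp add: algebra_simps)
  finally have "P dvd t * (3 * a) - Z * (2 * b) \<or> P dvd t * (3 * a) - Z * (2 * - b)"
    using \<open>prime P\<close> prime_dvd_mult_iff by (metis dvd_triv_left)
  moreover have "\<not> 3 dvd - b"
    using \<open>\<not> 3 dvd b\<close> by simp
  moreover have "6 dvd t"
    by (simp add: t_def)
  ultimately show False
    using prime_nine_four_squares_descent_impossible
      [OF \<open>prime P\<close> _ \<open>odd a\<close> _ \<open>coprime X t\<close> _ sum] P' \<open>\<not> 3 dvd b\<close>
    by blast
qed

theorem proposition2:
  fixes p :: nat and a b :: int and x y z :: rat
  assumes "prime p"
    and "int p = 9 * a ^ 2 + 4 * b ^ 2"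
    and "of_nat p * x ^ 4 - 36 * y ^ 4 = z ^ 2"
  shows "x = 0 \<and> y = 0 \<and> z = 0"
proof (cases "x = 0 \<and> y = 0")
  case True
  then show ?thesis
    using assms(3) by simp
next
  case False
  then obtain X Y :: int and r :: rat
    where "coprime X Y" "r \<noteq> 0" and xy: "x = of_int X * r" "y = of_int Y * r"
    using rat_pair_eq_coprime_int_multiple by blast
  have "(z / r ^ 2) ^ 2 = of_int (int p * X ^ 4 - 36 * Y ^ 4)"
    using assms(3) \<open>r \<noteq> 0\<close> by (simp add: xy power_divide power_mult_distrib field_simps)
  then obtain Z where "z / r ^ 2 = of_int Z"
    using rat_power_eq_of_int_imp_int pos2 by metis
  then have "int p * X ^ 4 - 36 * Y ^ 4 = Z ^ 2"
    using \<open>(z / r ^ 2) ^ 2 = _\<close> by (metis of_int_eq_iff of_int_power)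
  moreover have "prime (int p)"
    using \<open>prime p\<close> by simp
  ultimately show ?thesis
    using quartic_no_coprime_int_solution \<open>coprime X Y\<close> assms(2) by blast
qed

end
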